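(* For a positive integer $n$, let \[ Z^{+}(n)=\sum_{k=0}^{n-1}\frac{(-1)^{k}+k!\,(n-k-1)!}{n}. \] Then $Z^{+}(n)$ is a natural number if and only if $n$ is even or $n$ is non-composite (i.e. $n=1$ or $n$ is prime).
   Context: $Z^{+}(n)=\sum_{k=0}^{n-1}(-1)^kM_k(n)$ where $M_{k}(n)=\frac{1+(-1)^{k}k!(n-k-1)!}{n}$ for $0\le k\le n-1$. *)

theory Defs
  imports Complex_Main "HOL-Computational_Algebra.Primes"
begin

definition Zplus :: "nat \<Rightarrow> rat" where
  "Zplus n = (\<Sum>k = 0..n-1. ((-1) ^ k + of_nat (fact k * fact (n - k - 1))) / of_nat n)"

end

theory Submission
  imports Defs "HOL-Number_Theory.Number_Theory"
begin

text \<open>Modulo \<open>n\<close>, each factor \<open>n - j\<close> of \<open>(n - 1)!\<close> is congruent to \<open>-j\<close>, so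
  \<open>(-1)^k k! (n - k - 1)! \<equiv> (n - 1)!\<close> for every \<open>k < n\<close>. Hence
  \<open>n Z\<^sup>+(n) = \<Sum>k<n. k! (n - k - 1)! + [n odd] \<equiv> ((n - 1)! + 1) [n odd]\<close>: for even \<open>n\<close> this
  vanishes, and for odd \<open>n\<close> it vanishes exactly when \<open>n\<close> divides \<open>(n - 1)! + 1\<close>, which by
  Wilson's theorem and its converse means that \<open>n = 1\<close> or \<open>n\<close> is prime.\<close>

definition fact_convolution :: "nat \<Rightarrow> nat" where
  "fact_convolution n = (\<Sum>k<n. fact k * fact (n - k - 1))"

lemma sum_lessThan_neg_one_power: "(\<Sum>k<n. (- 1 :: 'a :: ring_1) ^ k) = of_bool (odd n)"
  by (induction n) auto

lemma of_nat_divide_in_Nats_iff: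
  fixes a n :: nat
  assumes "n > 0"
  shows "(of_nat a / of_nat n :: 'a :: field_char_0) \<in> \<nat> \<longleftrightarrow> n dvd a"
proof
  assume "(of_nat a / of_nat n :: 'a) \<in> \<nat>"
  then obtain m where "(of_nat a / of_nat n :: 'a) = of_nat m" by (auto elim: Nats_cases)
  then have "(of_nat a :: 'a) = of_nat (n * m)" using assms by (simp add: field_simps)
  then show "n dvd a" by (simp only: of_nat_eq_iff) simp
qed (use assms in auto)

lemma fact_mult_fact_cong:
  assumes "k < n"
  shows "[(- 1) ^ k * fact k * fact (n - k - 1) = fact (n - 1)] (mod int n)"
  using assms
proof (induction k)
  case 0
  then show ?case by simp
next
  case (Suc k)
  define j where "j = n - k - 2"
  have j: "n - Suc k = Suc j" "n - Suc (Suc k) = j"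
    using Suc.prems unfolding j_def by arith+
  have residue: "[- int (Suc k) = int (Suc j)] (mod int n)"
    using Suc.prems by (simp add: cong_iff_dvd_diff j_def of_nat_diff)
  have "(- 1) ^ Suc k * fact (Suc k) * fact (n - Suc k - 1)
      = (- 1) ^ k * fact k * fact j * - int (Suc k)"
    by (simp add: j algebra_simps)
  also have "[\<dots> = (- 1) ^ k * fact k * fact j * int (Suc j)] (mod int n)"
    using residue by (rule cong_scalar_left)
  also have "(- 1) ^ k * fact k * fact j * int (Suc j) = (- 1) ^ k * fact k * fact (n - k - 1)"
    by (simp add: j)
  also have "[\<dots> = fact (n - 1)] (mod int n)"
    using Suc by simp
  finally show ?case .
qed

lemma fact_convolution_cong:
  "[int (fact_convolution n) = fact (n - 1) * of_bool (odd n)] (mod int n)"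
proof -
  have "[int (fact_convolution n) = (\<Sum>k<n. (- 1) ^ k * fact (n - 1))] (mod int n)"
    unfolding fact_convolution_def of_nat_sum
  proof (rule cong_sum)
    fix k assume "k \<in> {..<n}"
    then have "[(- 1) ^ k * ((- 1) ^ k * fact k * fact (n - k - 1)) = (- 1) ^ k * fact (n - 1)]
        (mod int n)"
      by (intro cong_scalar_left fact_mult_fact_cong) simp
    then show "[int (fact k * fact (n - k - 1)) = (- 1) ^ k * fact (n - 1)] (mod int n)"
      by (simp add: of_nat_fact flip: mult.assoc power_add)
  qed
  also have "(\<Sum>k<n. (- 1) ^ k * fact (n - 1)) = fact (n - 1) * (of_bool (odd n) :: int)"
    by (simp add: sum_distrib_right[symmetric] sum_lessThan_neg_one_power)
  finally show ?thesis .
qed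

lemma wilson_converse:
  assumes "n > 1" and wilson: "[fact (n - 1) = - 1] (mod int n)"
  shows "prime n"
proof (rule ccontr)
  assume "\<not> prime n"
  then obtain q where q: "prime q" "q dvd n" "q \<noteq> n"
    using assms(1) prime_factor_nat[of n] by auto
  then have "q \<le> n - 1"
    using dvd_imp_le[OF q(2)] assms(1) by linarith
  then have "int q dvd fact (n - 1)"
    using q(1) by (metis dvd_fact of_nat_dvd_iff of_nat_fact prime_ge_1_nat)
  moreover have "int q dvd fact (n - 1) + 1"
    using wilson q(2) by (metis cong_iff_dvd_diff diff_minus_eq_add dvd_trans of_nat_dvd_iff)
  ultimately have "int q dvd 1"
    by (simp add: dvd_add_right_iff)
  then show False
    using q(1) by simp
qed

lemma wilson_iff:
  assumes "n \<ge> 1"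
  shows "[fact (n - 1) = - 1] (mod int n) \<longleftrightarrow> n = 1 \<or> prime n"
  using assms wilson_theorem[of n] wilson_converse[of n] by (cases "n = 1") auto

lemma Zplus_eq_fact_convolution:
  assumes "n \<ge> 1"
  shows "Zplus n = of_nat (fact_convolution n + of_bool (odd n)) / of_nat n"
proof -
  have "{0..n - 1} = {..<n}"
    using assms by auto
  then have "Zplus n = ((\<Sum>k<n. (- 1) ^ k) + of_nat (fact_convolution n)) / of_nat n"
    by (simp add: Zplus_def fact_convolution_def sum.distrib flip: sum_divide_distrib)
  then show ?thesis
    by (simp add: sum_lessThan_neg_one_power add.commute)
qed

theorem theorem2:
  fixes n :: nat
  assumes "n \<ge> 1"
  shows "Zplus n \<in> \<nat> \<longleftrightarrow> (even n \<or> n = 1 \<or> prime n)"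
proof -
  let ?odd = "of_bool (odd n) :: int"
  have "Zplus n \<in> \<nat> \<longleftrightarrow> n dvd fact_convolution n + of_bool (odd n)"
    unfolding Zplus_eq_fact_convolution[OF assms]
    by (rule of_nat_divide_in_Nats_iff) (use assms in simp)
  also have "\<dots> \<longleftrightarrow> int n dvd int (fact_convolution n) + ?odd"
    by (metis of_nat_add of_nat_dvd_iff of_nat_of_bool)
  also have "\<dots> \<longleftrightarrow> int n dvd (fact (n - 1) + 1) * ?odd"
    using fact_convolution_cong[of n]
    by (intro cong_dvd_iff) (simp add: distrib_right cong_add_rcancel)
  also have "\<dots> \<longleftrightarrow> even n \<or> n = 1 \<or> prime n"
    using wilson_iff[OF assms] by (cases "even n") (auto simp: cong_iff_dvd_diff)
  finally show ?thesis .
qed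

end
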